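(* Let $R$ be a Boolean algebra, $P(x_1,\ldots,x_n)$ a Boolean polynomial, $W$ a set and $w_1,\ldots,w_n\in W$. Then $G_P^W[w_1,\ldots,w_n](R)$ is an open subset of $(G(R)^W)^n$, and $G_P(R)$ is an open subset of $G(R)^n$.
   Context: Identify the family $2^R$ of all subsets of $R$ with $\{0,1\}^R$ with the product topology. $G(R)=\{(I^-,I^+)\in2^R\times2^R: I^-\text{ is an ideal of }R,\ I^+\text{ is a filter of }R,\ a\le b\text{ for all }a\in I^-,b\in I^+\}$, with the subspace topology; powers of $G(R)$ carry the product topology. $G_P(R)\subseteq G(R)^n$ is the set of all $((I_1^-,I_1^+),\ldots,(I_n^-,I_n^+))$ for which there exist $r_1^-,r_1^+,\ldots,r_n^-,r_n^+$ with $r_i^\varepsilon\in I_i^\varepsilon$ for all $i$ and $\varepsilon\in\{+,-\}$ and $P(r_1^{\varepsilon_1},\ldots,r_n^{\varepsilon_n})=0$ for every choice of signs $\varepsilon_i\in\{+,-\}$. $G_P^W[w_1,\ldots,w_n](R)\subseteq(G(R)^W)^n$ is the set of all $n$-tuples $\big((I_w^-(1),I_w^+(1))_{w\in W},\ldots,(I_w^-(n),I_w^+(n))_{w\in W}\big)$ for which there exist $r_1^-,r_1^+,\ldots,r_n^-,r_n^+$ with $r_i^\varepsilon\in I_{w_i}^\varepsilon(i)$ for all $i,\varepsilon$ and $P(r_1^{\varepsilon_1},\ldots,r_n^{\varepsilon_n})=0$ for every choice of signs $\varepsilon_i\in\{+,-\}$. *)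

theory Defs
  imports "HOL-Analysis.Analysis"
begin

datatype bpoly = BVar nat | BZero | BOne | BMeet bpoly bpoly | BJoin bpoly bpoly | BCompl bpoly

primrec bvars :: "bpoly \<Rightarrow> nat set" where
  "bvars (BVar i) = {i}"
| "bvars BZero = {}"
| "bvars BOne = {}"
| "bvars (BMeet p q) = bvars p \<union> bvars q"
| "bvars (BJoin p q) = bvars p \<union> bvars q"
| "bvars (BCompl p) = bvars p"

primrec beval :: "bpoly \<Rightarrow> (nat \<Rightarrow> 'a::boolean_algebra) \<Rightarrow> 'a" where
  "beval (BVar i) r = r i"
| "beval BZero r = bot"
| "beval BOne r = top"
| "beval (BMeet p q) r = inf (beval p r) (beval q r)"
| "beval (BJoin p q) r = sup (beval p r) (beval q r)"
| "beval (BCompl p) r = - beval p r"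

definition is_ideal :: "'a::boolean_algebra set \<Rightarrow> bool" where
  "is_ideal I \<longleftrightarrow> I \<noteq> {} \<and> (\<forall>a b. a \<in> I \<and> b \<le> a \<longrightarrow> b \<in> I) \<and> (\<forall>a\<in>I. \<forall>b\<in>I. sup a b \<in> I)"

definition is_filter :: "'a::boolean_algebra set \<Rightarrow> bool" where
  "is_filter F \<longleftrightarrow> F \<noteq> {} \<and> (\<forall>a b. a \<in> F \<and> a \<le> b \<longrightarrow> b \<in> F) \<and> (\<forall>a\<in>F. \<forall>b\<in>F. inf a b \<in> F)"

text \<open>2^R with the product topology of {0,1}^R (transported along the characteristic-function
  bijection between subsets of R and functions R \<Rightarrow> bool, bool discrete).\<close>
definition powset_top :: "'a set topology" where
  "powset_top = pullback_topology UNIV (\<lambda>S x. x \<in> S)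
     (product_topology (\<lambda>_. discrete_topology (UNIV :: bool set)) UNIV)"

definition Gset :: "('a::boolean_algebra set \<times> 'a set) set" where
  "Gset = {(Im, Ip). is_ideal Im \<and> is_filter Ip \<and> (\<forall>a\<in>Im. \<forall>b\<in>Ip. a \<le> b)}"

definition G_top :: "('a::boolean_algebra set \<times> 'a set) topology" where
  "G_top = subtopology (prod_topology powset_top powset_top) Gset"

text \<open>Tuples are indexed by {0..<n} (index i here corresponds to i+1 in the paper).\<close>
definition G_P :: "bpoly \<Rightarrow> nat \<Rightarrow> (nat \<Rightarrow> ('a::boolean_algebra set \<times> 'a set)) set" where
  "G_P P n = {x \<in> PiE {..<n} (\<lambda>_. Gset).
     \<exists>rm rp :: nat \<Rightarrow> 'a. (\<forall>i<n. rm i \<in> fst (x i) \<and> rp i \<in> snd (x i)) \<and>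
       (\<forall>eps :: nat \<Rightarrow> bool. beval P (\<lambda>i. if eps i then rp i else rm i) = bot)}"

definition G_PW :: "bpoly \<Rightarrow> 'w set \<Rightarrow> nat \<Rightarrow> (nat \<Rightarrow> 'w)
    \<Rightarrow> (nat \<Rightarrow> 'w \<Rightarrow> ('a::boolean_algebra set \<times> 'a set)) set" where
  "G_PW P W n w = {x \<in> PiE {..<n} (\<lambda>_. PiE W (\<lambda>_. Gset)).
     \<exists>rm rp :: nat \<Rightarrow> 'a. (\<forall>i<n. rm i \<in> fst (x i (w i)) \<and> rp i \<in> snd (x i (w i))) \<and>
       (\<forall>eps :: nat \<Rightarrow> bool. beval P (\<lambda>i. if eps i then rp i else rm i) = bot)}"

end

theory Submission
  imports Defs
begin

text \<open>Membership of a fixed element is a subbasic open condition on 2^R, hence so is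
  "a in I^- and b in I^+" on G(R). A point of G_P (or G_P^W) comes with witnesses
  r_i^-, r_i^+, and every tuple whose ideals and filters still contain these finitely many
  witnesses lies in the set as well; so the set is a union of finite intersections of
  such open conditions.\<close>

lemma topspace_powset_top [simp]: "topspace powset_top = UNIV"
  unfolding powset_top_def by (simp add: topspace_pullback_topology)

lemma topspace_G_top [simp]: "topspace G_top = Gset"
  unfolding G_top_def by simp

lemma openin_powset_top_mem: "openin powset_top {S. a \<in> S}"
proof -
  let ?B = "product_topology (\<lambda>_. discrete_topology (UNIV :: bool set)) UNIV"
  have "continuous_map ?B (discrete_topology UNIV) (\<lambda>g. g a)"
    by (rule continuous_map_product_projection) simp
  from openin_continuous_map_preimage[OF this, of "{True}"]
  have "openin ?B {g. g a}"
    by (simp add: topspace_product_topology PiE_UNIV_domain)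
  then show ?thesis
    unfolding powset_top_def by (auto simp: openin_pullback_topology intro!: exI[of _ "{g. g a}"])
qed

lemma openin_G_top_mem: "openin G_top {p \<in> Gset. a \<in> fst p \<and> b \<in> snd p}"
proof -
  have "openin (prod_topology powset_top powset_top) ({S. a \<in> S} \<times> {S. b \<in> S})"
    by (simp add: openin_prod_Times_iff openin_powset_top_mem)
  then have "openin G_top (Gset \<inter> ({S. a \<in> S} \<times> {S. b \<in> S}))"
    unfolding G_top_def by (simp add: openin_subtopology_Int2)
  moreover have "Gset \<inter> ({S. a \<in> S} \<times> {S. b \<in> S}) = {p \<in> Gset. a \<in> fst p \<and> b \<in> snd p}"
    by auto
  ultimately show ?thesis by simp
qed

lemma openin_continuous_map_G_top_mem:
  assumes "continuous_map X G_top g"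
  shows "openin X {y \<in> topspace X. a \<in> fst (g y) \<and> b \<in> snd (g y)}"
proof -
  have "{y \<in> topspace X. g y \<in> {p \<in> Gset. a \<in> fst p \<and> b \<in> snd p}}
      = {y \<in> topspace X. a \<in> fst (g y) \<and> b \<in> snd (g y)}"
    using continuous_map_image_subset_topspace[OF assms] by auto
  with openin_continuous_map_preimage[OF assms openin_G_top_mem[of a b]] show ?thesis
    by simp
qed

lemma openin_witnessed_G_top:
  fixes g :: "nat \<Rightarrow> 'x \<Rightarrow> ('a::boolean_algebra set \<times> 'a set)"
  assumes "\<And>i. i < n \<Longrightarrow> continuous_map X G_top (g i)"
  shows "openin X {y \<in> topspace X. \<exists>rm rp.
           (\<forall>i<n. rm i \<in> fst (g i y) \<and> rp i \<in> snd (g i y)) \<and> \<Phi> rm rp}"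
proof -
  define U where "U rm rp = (\<Inter>i\<in>{..<n}.
      {y \<in> topspace X. rm i \<in> fst (g i y) \<and> rp i \<in> snd (g i y)}) \<inter> topspace X" for rm rp
  have "openin X (U rm rp)" for rm rp
    unfolding U_def by (intro openin_INT openin_continuous_map_G_top_mem assms) auto
  moreover have "{y \<in> topspace X. \<exists>rm rp.
           (\<forall>i<n. rm i \<in> fst (g i y) \<and> rp i \<in> snd (g i y)) \<and> \<Phi> rm rp}
      = (\<Union>(rm, rp)\<in>{(rm, rp). \<Phi> rm rp}. U rm rp)"
    unfolding U_def by auto
  ultimately show ?thesis by auto
qed

theorem lemma4p3:
  fixes P :: bpoly and n :: nat and W :: "'w set" and w :: "nat \<Rightarrow> 'w"
  assumes "bvars P \<subseteq> {..<n}"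
    and "\<forall>i<n. w i \<in> W"
  shows "openin (product_topology (\<lambda>_. product_topology (\<lambda>_. (G_top :: ('a::boolean_algebra set \<times> 'a set) topology)) W) {..<n})
           (G_PW P W n w :: (nat \<Rightarrow> 'w \<Rightarrow> ('a set \<times> 'a set)) set)
       \<and> openin (product_topology (\<lambda>_. (G_top :: ('a set \<times> 'a set) topology)) {..<n})
           (G_P P n :: (nat \<Rightarrow> ('a set \<times> 'a set)) set)"
proof
  let ?X = "product_topology (\<lambda>_. product_topology (\<lambda>_. G_top) W) {..<n}
    :: (nat \<Rightarrow> 'w \<Rightarrow> ('a set \<times> 'a set)) topology"
  have "continuous_map ?X G_top (\<lambda>y. y i (w i))" if "i < n" for i
  proof -
    have "continuous_map ?X (product_topology (\<lambda>_. G_top) W) (\<lambda>y. y i)"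
      by (rule continuous_map_product_projection) (simp add: that)
    moreover have "continuous_map (product_topology (\<lambda>_. G_top) W) G_top (\<lambda>z. z (w i))"
      by (rule continuous_map_product_projection) (simp add: that assms(2))
    ultimately show ?thesis
      using continuous_map_compose by (fastforce simp: o_def)
  qed
  from openin_witnessed_G_top[where g = "\<lambda>i y. y i (w i)", OF this]
  show "openin ?X (G_PW P W n w)"
    unfolding G_PW_def by (simp add: topspace_product_topology)
next
  let ?X = "product_topology (\<lambda>_. G_top) {..<n} :: (nat \<Rightarrow> ('a set \<times> 'a set)) topology"
  have "continuous_map ?X G_top (\<lambda>y. y i)" if "i < n" for i
    by (rule continuous_map_product_projection) (simp add: that)
  from openin_witnessed_G_top[where g = "\<lambda>i y. y i", OF this]
  show "openin ?X (G_P P n)"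
    unfolding G_P_def by (simp add: topspace_product_topology)
qed

end
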